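(* Suppose $G(z)=\sum_{n\ge0}a_n^2z^n$ is type II admissible. Then there exist $\varepsilon\in(0,1)$, $C>0$ and $t_0$ such that for all $t\ge t_0$ and all integers $n\ge0$, \[ \left|a_n^2e^{nt}\frac{\sqrt{2\pi B(t)}}{H(t)}-\exp\left(-\frac{(n-A(t))^2}{2B(t)}\right)\right|\le\frac{C}{B^{\varepsilon}(t)}. \]
   Context: $G$ is entire with $a_n\ge0$, infinitely many non-zero; $H(t)=G(e^t)$, $A=H'/H$, $B=A'$. $G$ is type II admissible if: (1) $B$ is non-decreasing and unbounded; (2) $A(t)=O(B^2(t))$ as $t\to\infty$; (3) there exist constants $C_G>2$ and $\varepsilon>0$ such that, with $\delta(t)=\sqrt{C_G\log B(t)/B(t)}$, for all sufficiently large $t$ and all $|\theta|\le\delta(t)$, $\log\frac{H(t+i\theta)}{H(t)}=i\theta A(t)-\frac12\theta^2B(t)+\Delta(t,\theta)$ with $|\Delta(t,\theta)|\le B^{3/2-\varepsilon}(t)|\theta|^3$; (4) $|H(t+i\theta)|=O(H(t)/B(t))$ as $t\to\infty$, uniformly in $\delta(t)\le|\theta|\le\pi$. *)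

theory Defs
  imports "HOL-Analysis.Analysis" "HOL-Library.Landau_Symbols"
begin

text \<open>G(z) = sum of b n * z^n with b n >= 0. Complex extension of H(t) = G(e^t):
  Hc w = G(exp w) = sum of b n * exp(n w).\<close>

definition Hc :: "(nat \<Rightarrow> real) \<Rightarrow> complex \<Rightarrow> complex" where
  "Hc b w = (\<Sum>n. complex_of_real (b n) * exp (of_nat n * w))"

definition Hr :: "(nat \<Rightarrow> real) \<Rightarrow> real \<Rightarrow> real" where
  "Hr b t = (\<Sum>n. b n * exp (real n * t))"

definition Af :: "(nat \<Rightarrow> real) \<Rightarrow> real \<Rightarrow> real" where
  "Af b t = deriv (Hr b) t / Hr b t"

definition Bf :: "(nat \<Rightarrow> real) \<Rightarrow> real \<Rightarrow> real" where
  "Bf b t = deriv (Af b) t"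

definition deltaf :: "(nat \<Rightarrow> real) \<Rightarrow> real \<Rightarrow> real \<Rightarrow> real" where
  "deltaf b CG t = sqrt (CG * ln (Bf b t) / Bf b t)"

definition type_II_admissible :: "(nat \<Rightarrow> real) \<Rightarrow> bool" where
  "type_II_admissible b \<longleftrightarrow>
     (\<forall>n. b n \<ge> 0) \<and>
     (\<forall>z::complex. summable (\<lambda>n. b n * norm z ^ n)) \<and>
     infinite {n. b n \<noteq> 0} \<and>
     mono (Bf b) \<and> \<not> bdd_above (range (Bf b)) \<and>
     Af b \<in> O[at_top](\<lambda>t. (Bf b t)\<^sup>2) \<and>
     (\<exists>CG>2. \<exists>eps>0.
       (\<forall>\<^sub>F t in at_top. \<forall>\<theta>::real. \<bar>\<theta>\<bar> \<le> deltaf b CG t \<longrightarrow>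
          (\<exists>D::complex. Hc b (Complex t \<theta>) =
              complex_of_real (Hr b t) *
                exp (\<i> * complex_of_real (\<theta> * Af b t) - complex_of_real (\<theta>\<^sup>2 * Bf b t / 2) + D)
            \<and> norm D \<le> Bf b t powr (3/2 - eps) * \<bar>\<theta>\<bar> ^ 3)) \<and>
       (\<exists>K. \<forall>\<^sub>F t in at_top. \<forall>\<theta>::real. deltaf b CG t \<le> \<bar>\<theta>\<bar> \<and> \<bar>\<theta>\<bar> \<le> pi \<longrightarrow>
          norm (Hc b (Complex t \<theta>)) \<le> K * Hr b t / Bf b t))"

end

(*
  Cauchy's formula makes 2 pi a_n^2 e^(nt) / H(t) the n-th Fourier coefficient of
  theta |-> H(t + i theta) / H(t) on [-pi, pi], while sqrt (2 pi / B) exp (-(n - A)^2 / (2 B))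
  is the Fourier transform of the Gaussian exp (i theta A - theta^2 B / 2) over the whole line.
  The difference of the two integrands is controlled in three ranges: for |theta| <= delta the
  expansion (3) gives |e^D - 1| <= 3/2 B^(3/2 - eps) |theta|^3 times the Gaussian, whose
  integral is 6 B^(-1/2 - eps); for delta <= |theta| <= pi bound (4) gives O(1/B);
  and the Gaussian mass beyond delta is O(e^(-delta^2 B / 4) / sqrt B) = O(B^(-1)) because
  delta^2 B = C_G log B with C_G > 2. Multiplying by sqrt (B / (2 pi)) gives an error of order
  B^(-min eps (1/2)).
*)

theory Submission
  imports
    Defs
    "HOL-Probability.Characteristic_Functions"
    "HOL-Complex_Analysis.Weierstrass_Factorization"
    "HOL-Real_Asymp.Real_Asymp"
begin

section \<open>Gaussian integrals\<close>

lemma has_bochner_integral_gaussian_abs_power: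
  fixes B M :: real
  assumes B: "B > 0"
    and M: "has_bochner_integral lborel (\<lambda>x. std_normal_density x * \<bar>x\<bar> ^ k) M"
  shows "has_bochner_integral lborel (\<lambda>\<theta>. exp (- (B * \<theta>\<^sup>2) / 2) * \<bar>\<theta>\<bar> ^ k)
           (sqrt (2 * pi) * M / sqrt B ^ (k + 1))"
proof -
  define s where "s = sqrt B"
  have s: "s > 0" "s\<^sup>2 = B" using B by (auto simp: s_def)
  have "has_bochner_integral lborel (\<lambda>\<theta>. std_normal_density (0 + s * \<theta>) * \<bar>0 + s * \<theta>\<bar> ^ k) (M / s)"
    using lborel_has_bochner_integral_real_affine_iff[of s _ M 0] M s by (simp add: divide_inverse_commute)
  then have "has_bochner_integral lborel
      (\<lambda>\<theta>. (sqrt (2 * pi) / s ^ k) * (std_normal_density (s * \<theta>) * \<bar>s * \<theta>\<bar> ^ k))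
      (sqrt (2 * pi) / s ^ k * (M / s))"
    by (intro has_bochner_integral_mult_right) simp
  moreover have "(sqrt (2 * pi) / s ^ k) * (std_normal_density (s * \<theta>) * \<bar>s * \<theta>\<bar> ^ k)
      = exp (- (B * \<theta>\<^sup>2) / 2) * \<bar>\<theta>\<bar> ^ k" for \<theta>
    using s by (simp add: std_normal_density_def abs_mult power_mult_distrib)
  ultimately show ?thesis
    by (simp add: s_def field_simps)
qed

lemma has_bochner_integral_gaussian:
  "(B::real) > 0 \<Longrightarrow> has_bochner_integral lborel (\<lambda>\<theta>. exp (- (B * \<theta>\<^sup>2) / 2)) (sqrt (2 * pi / B))"
  using has_bochner_integral_gaussian_abs_power[of B 0 1]
  by (simp add: has_bochner_integral_iff real_sqrt_divide)

lemma has_bochner_integral_gaussian_abs_cube: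
  fixes B :: real
  assumes B: "B > 0"
  shows "has_bochner_integral lborel (\<lambda>\<theta>. exp (- (B * \<theta>\<^sup>2) / 2) * \<bar>\<theta>\<bar> ^ 3) (4 / B\<^sup>2)"
proof -
  have "has_bochner_integral lborel (\<lambda>x. std_normal_density x * \<bar>x\<bar> ^ 3) (sqrt (2 / pi) * 2)"
    using std_normal_moment_abs_odd[of 1] by (simp add: numeral_eq_Suc)
  note moment = has_bochner_integral_gaussian_abs_power[OF B this]
  have "sqrt (2 * pi) * sqrt (2 / pi) = 2"
    by (simp add: real_sqrt_mult[symmetric])
  moreover have "sqrt B ^ (3 + 1) = (sqrt B ^ 2) ^ 2"
    by (simp flip: power_mult)
  ultimately show ?thesis
    using moment B by (simp add: mult.assoc[symmetric])
qed

lemma has_bochner_integral_gaussian_iexp: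
  fixes B y :: real
  assumes B: "B > 0"
  shows "has_bochner_integral lborel (\<lambda>\<theta>. exp (- (B * \<theta>\<^sup>2) / 2) *\<^sub>R iexp (y * \<theta>))
           (of_real (sqrt (2 * pi / B) * exp (- y\<^sup>2 / (2 * B))))"
proof -
  define s where "s = sqrt B"
  have s: "s > 0" "s\<^sup>2 = B" using B by (auto simp: s_def)
  let ?h = "\<lambda>u. std_normal_density u *\<^sub>R iexp (y / s * u)"
  have "integrable lborel ?h"
  proof (rule Bochner_Integration.integrable_bound)
    show "integrable lborel std_normal_density"
      using integrable_std_normal_moment_abs[of 0] by simp
  qed (auto simp: norm_mult)
  moreover have "integral\<^sup>L lborel ?h = char std_normal_distribution (y / s)"
    unfolding char_def by (rule integral_density[symmetric]) auto
  ultimately have "has_bochner_integral lborel ?h (of_real (exp (- (y / s)\<^sup>2 / 2)))"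
    by (simp add: has_bochner_integral_iff char_std_normal_distribution)
  then have "has_bochner_integral lborel (\<lambda>\<theta>. ?h (0 + s * \<theta>)) (of_real (exp (- (y / s)\<^sup>2 / 2)) /\<^sub>R s)"
    using lborel_has_bochner_integral_real_affine_iff[of s ?h _ 0] s by simp
  then have "has_bochner_integral lborel (\<lambda>\<theta>. sqrt (2 * pi) *\<^sub>R ?h (s * \<theta>))
      (sqrt (2 * pi) *\<^sub>R (of_real (exp (- (y / s)\<^sup>2 / 2)) /\<^sub>R s))"
    by (intro has_bochner_integral_scaleR_right) simp
  moreover have "sqrt (2 * pi) *\<^sub>R ?h (s * \<theta>) = exp (- (B * \<theta>\<^sup>2) / 2) *\<^sub>R iexp (y * \<theta>)" for \<theta>
    using s by (simp add: std_normal_density_def power_mult_distrib)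
  moreover have "sqrt (2 * pi) *\<^sub>R (of_real (exp (- (y / s)\<^sup>2 / 2)) /\<^sub>R s)
      = (of_real (sqrt (2 * pi / B) * exp (- y\<^sup>2 / (2 * B))) :: complex)"
    using s by (simp add: s_def real_sqrt_divide power_divide scaleR_conv_of_real field_simps)
  ultimately show ?thesis by simp
qed

section \<open>Comparison of a Fourier coefficient with a Gaussian\<close>

lemma norm_exp_expansion_minus_gaussian:
  fixes A B \<nu> \<theta> :: real and D :: complex
  assumes "norm D \<le> 1/2"
  shows "norm (exp (\<i> * of_real (\<theta> * A) - of_real (\<theta>\<^sup>2 * B / 2) + D) * iexp (- (\<nu> * \<theta>))
              - exp (- (B * \<theta>\<^sup>2) / 2) *\<^sub>R iexp ((A - \<nu>) * \<theta>))
         \<le> 3/2 * norm D * exp (- (B * \<theta>\<^sup>2) / 2)"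
proof -
  let ?g = "exp (- (B * \<theta>\<^sup>2) / 2) *\<^sub>R iexp ((A - \<nu>) * \<theta>)"
  have "exp (\<i> * of_real (\<theta> * A) - of_real (\<theta>\<^sup>2 * B / 2) + D) * iexp (- (\<nu> * \<theta>)) = ?g * exp D"
    by (simp add: scaleR_conv_of_real exp_add [symmetric] exp_diff algebra_simps flip: exp_of_real)
  then have "exp (\<i> * of_real (\<theta> * A) - of_real (\<theta>\<^sup>2 * B / 2) + D) * iexp (- (\<nu> * \<theta>)) - ?g
      = ?g * (exp D - 1)"
    by (simp add: right_diff_distrib)
  then have "norm (exp (\<i> * of_real (\<theta> * A) - of_real (\<theta>\<^sup>2 * B / 2) + D) * iexp (- (\<nu> * \<theta>)) - ?g)
      = exp (- (B * \<theta>\<^sup>2) / 2) * norm (exp D - 1)"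
    by (simp add: norm_mult)
  also have "\<dots> \<le> exp (- (B * \<theta>\<^sup>2) / 2) * (3/2 * norm D)"
    using norm_exp_bounds(2)[OF assms] by (intro mult_left_mono) auto
  finally show ?thesis by (simp add: algebra_simps)
qed

lemma gaussian_tail_le:
  fixes B \<delta> \<theta> :: real
  assumes "0 \<le> B" "0 \<le> \<delta>" "\<delta> \<le> \<bar>\<theta>\<bar>"
  shows "exp (- (B * \<theta>\<^sup>2) / 2) \<le> exp (- (\<delta>\<^sup>2 * B / 4)) * exp (- (B / 2 * \<theta>\<^sup>2) / 2)"
proof -
  have "\<delta>\<^sup>2 * B \<le> \<theta>\<^sup>2 * B"
    using assms by (intro mult_right_mono) (auto simp flip: abs_le_square_iff)
  then have "- (B * \<theta>\<^sup>2) / 2 \<le> - (\<delta>\<^sup>2 * B / 4) + - (B / 2 * \<theta>\<^sup>2) / 2"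
    by (simp add: algebra_simps)
  then show ?thesis by (simp flip: exp_add)
qed

lemma gaussian_error_integral_rescaled:
  fixes B \<epsilon> K e :: real
  assumes B_pos: "B > 0"
  shows "sqrt (B / (2 * pi)) * (3/2 * B powr (3/2 - \<epsilon>) * (4 / B\<^sup>2) + K / B * (2 * pi) + e * sqrt (2 * pi / (B / 2)))
           = 6 / sqrt (2 * pi) * B powr (- \<epsilon>) + K * sqrt (2 * pi / B) + sqrt 2 * e"
proof -
  have "B powr (- \<epsilon>) = B powr (1/2 + (3/2 - \<epsilon>) - 2)" by simp
  also have "\<dots> = B powr (1/2) * B powr (3/2 - \<epsilon>) / B powr 2"
    by (simp only: powr_add powr_diff)
  also have "\<dots> = sqrt B * B powr (3/2 - \<epsilon>) / B\<^sup>2"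
    using B_pos by (simp add: powr_half_sqrt)
  finally have "sqrt (B / (2 * pi)) * (3/2 * B powr (3/2 - \<epsilon>) * (4 / B\<^sup>2)) = 6 / sqrt (2 * pi) * B powr (- \<epsilon>)"
    by (simp add: real_sqrt_divide field_simps)
  moreover have "sqrt (B / (2 * pi)) * (K / B * (2 * pi)) = K * sqrt (2 * pi / B)"
  proof -
    have "sqrt B * sqrt B = B" "sqrt (2 * pi) * sqrt (2 * pi) = 2 * pi"
      using B_pos by simp_all
    then show ?thesis
      using B_pos by (simp add: real_sqrt_divide field_simps)
  qed
  moreover have "sqrt (B / (2 * pi)) * sqrt (2 * pi / (B / 2)) = sqrt 2"
    using B_pos by (simp add: real_sqrt_mult [symmetric])
  ultimately show ?thesis
    by (simp add: distrib_left)
qed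

text \<open>
  At a fixed t, F \<theta> plays the role of H(t + i \<theta>) / H(t) and c that of a_n^2 e^(nt) / H(t);
  the last two assumptions are conditions (3) and (4) of type II admissibility.
\<close>

locale saddle_point_data =
  fixes F :: "real \<Rightarrow> complex" and c A B \<nu> \<delta> \<epsilon> K :: real
  assumes B_pos: "B > 0"
    and coefficient: "has_bochner_integral lborel
          (\<lambda>\<theta>. indicator {-pi..pi} \<theta> *\<^sub>R (F \<theta> * iexp (- (\<nu> * \<theta>)))) (of_real (2 * pi * c))"
    and delta_nonneg: "0 \<le> \<delta>" and delta_less_pi: "\<delta> < pi"
    and cubic_error_small: "B powr (3/2 - \<epsilon>) * \<delta> ^ 3 \<le> 1/2"
    and near_expansion: "\<And>\<theta>. \<bar>\<theta>\<bar> \<le> \<delta> \<Longrightarrow> \<exists>D. F \<theta> = exp (\<i> * of_real (\<theta> * A) - of_real (\<theta>\<^sup>2 * B / 2) + D)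
                                    \<and> norm D \<le> B powr (3/2 - \<epsilon>) * \<bar>\<theta>\<bar> ^ 3"
    and far_bound: "\<And>\<theta>. \<delta> \<le> \<bar>\<theta>\<bar> \<Longrightarrow> \<bar>\<theta>\<bar> \<le> pi \<Longrightarrow> norm (F \<theta>) \<le> K / B"
begin

lemma far_bound_nonneg: "0 \<le> K"
proof -
  have "norm (F pi) \<le> K / B"
    using far_bound[of pi] delta_less_pi by simp
  then have "0 \<le> K / B"
    using norm_ge_zero order_trans by blast
  then show ?thesis using B_pos by (simp add: zero_le_divide_iff)
qed

lemma comparison_integrand_bound:
  "norm (indicator {-pi..pi} \<theta> *\<^sub>R (F \<theta> * iexp (- (\<nu> * \<theta>))) - exp (- (B * \<theta>\<^sup>2) / 2) *\<^sub>R iexp ((A - \<nu>) * \<theta>))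
     \<le> 3/2 * B powr (3/2 - \<epsilon>) * (exp (- (B * \<theta>\<^sup>2) / 2) * \<bar>\<theta>\<bar> ^ 3)
        + K / B * indicator {-pi..pi} \<theta> + exp (- (\<delta>\<^sup>2 * B / 4)) * exp (- (B / 2 * \<theta>\<^sup>2) / 2)"
    (is "norm (?P - ?g) \<le> ?near + ?far + ?tail")
proof -
  have nonneg: "0 \<le> ?near" "0 \<le> ?far" "0 \<le> ?tail"
    using B_pos far_bound_nonneg by auto
  consider (inner) "\<bar>\<theta>\<bar> \<le> \<delta>" | (middle) "\<delta> < \<bar>\<theta>\<bar>" "\<bar>\<theta>\<bar> \<le> pi" | (outer) "pi < \<bar>\<theta>\<bar>"
    by linarith
  then show ?thesis
  proof cases
    case inner
    obtain D where F: "F \<theta> = exp (\<i> * of_real (\<theta> * A) - of_real (\<theta>\<^sup>2 * B / 2) + D)"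
      and D: "norm D \<le> B powr (3/2 - \<epsilon>) * \<bar>\<theta>\<bar> ^ 3"
      using near_expansion[OF \<open>\<bar>\<theta>\<bar> \<le> \<delta>\<close>] by blast
    have "B powr (3/2 - \<epsilon>) * \<bar>\<theta>\<bar> ^ 3 \<le> B powr (3/2 - \<epsilon>) * \<delta> ^ 3"
      using inner by (intro mult_left_mono power_mono) auto
    then have "norm D \<le> 1/2" using D cubic_error_small by linarith
    moreover have "?P = F \<theta> * iexp (- (\<nu> * \<theta>))"
      using inner delta_less_pi by (simp add: indicator_def abs_le_iff)
    ultimately have "norm (?P - ?g) \<le> 3/2 * norm D * exp (- (B * \<theta>\<^sup>2) / 2)"
      unfolding F by (simp only: norm_exp_expansion_minus_gaussian)
    also have "\<dots> \<le> ?near"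
      using D by (simp add: mult_right_mono)
    finally show ?thesis using nonneg by linarith
  next
    case middle
    then have "\<theta> \<in> {-pi..pi}" by (auto simp: abs_le_iff)
    then have "norm ?P \<le> ?far"
      using middle far_bound[of \<theta>] by (simp add: norm_mult)
    moreover have "norm ?g \<le> ?tail"
      using gaussian_tail_le[of B \<delta> \<theta>] B_pos delta_nonneg middle by simp
    ultimately show ?thesis
      using norm_triangle_ineq4[of ?P ?g] nonneg by linarith
  next
    case outer
    then have "\<theta> \<notin> {-pi..pi}" by auto
    then have "norm (?P - ?g) = norm ?g" by simp
    moreover have "norm ?g \<le> ?tail"
      using gaussian_tail_le[of B \<delta> \<theta>] B_pos delta_nonneg delta_less_pi outer by simp
    ultimately show ?thesis using nonneg by linarith
  qed
qed

lemma normal_approximation_error: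
  "\<bar>c * sqrt (2 * pi * B) - exp (- ((\<nu> - A)\<^sup>2 / (2 * B)))\<bar>
     \<le> 6 / sqrt (2 * pi) * B powr (- \<epsilon>) + K * sqrt (2 * pi / B) + sqrt 2 * exp (- (\<delta>\<^sup>2 * B / 4))"
proof -
  define h where "h = (\<lambda>\<theta>. indicator {-pi..pi} \<theta> *\<^sub>R (F \<theta> * iexp (- (\<nu> * \<theta>)))
                              - exp (- (B * \<theta>\<^sup>2) / 2) *\<^sub>R iexp ((A - \<nu>) * \<theta>))"
  define g where "g = (\<lambda>\<theta>. 3/2 * B powr (3/2 - \<epsilon>) * (exp (- (B * \<theta>\<^sup>2) / 2) * \<bar>\<theta>\<bar> ^ 3)
                              + K / B * indicator {-pi..pi} \<theta>
                              + exp (- (\<delta>\<^sup>2 * B / 4)) * exp (- (B / 2 * \<theta>\<^sup>2) / 2))"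
  define R where "R = 2 * pi * c - sqrt (2 * pi / B) * exp (- ((\<nu> - A)\<^sup>2 / (2 * B)))"
  define I where "I = 3/2 * B powr (3/2 - \<epsilon>) * (4 / B\<^sup>2) + K / B * (2 * pi)
                      + exp (- (\<delta>\<^sup>2 * B / 4)) * sqrt (2 * pi / (B / 2))"
  have "has_bochner_integral lborel h (of_real R)"
    using has_bochner_integral_diff[OF coefficient has_bochner_integral_gaussian_iexp[OF B_pos, of "A - \<nu>"]]
    by (simp add: h_def R_def power2_commute)
  moreover have "has_bochner_integral lborel (indicator {-pi..pi} :: real \<Rightarrow> real) (2 * pi)"
    using has_bochner_integral_real_indicator[of "{-pi..pi}" lborel] by simp
  then have "has_bochner_integral lborel g I"
    unfolding g_def I_def using B_pos
    by (intro has_bochner_integral_add has_bochner_integral_mult_right has_bochner_integral_gaussian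
        has_bochner_integral_gaussian_abs_cube) auto
  moreover have "norm (h \<theta>) \<le> g \<theta>" for \<theta>
    unfolding h_def g_def by (rule comparison_integrand_bound)
  ultimately have "norm (of_real R :: complex) \<le> I"
    using Bochner_Integration.integral_norm_bound_integral[of lborel h g]
    by (simp add: has_bochner_integral_iff)
  then have "sqrt (B / (2 * pi)) * \<bar>R\<bar> \<le> sqrt (B / (2 * pi)) * I"
    using B_pos by (intro mult_left_mono) auto
  moreover have "sqrt (B / (2 * pi)) * R = c * sqrt (2 * pi * B) - exp (- ((\<nu> - A)\<^sup>2 / (2 * B)))"
  proof -
    have "sqrt (2 * pi) * sqrt (2 * pi) = 2 * pi" by simp
    then show ?thesis
      using B_pos by (simp add: R_def real_sqrt_divide real_sqrt_mult field_simps)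
  qed
  then have "sqrt (B / (2 * pi)) * \<bar>R\<bar> = \<bar>c * sqrt (2 * pi * B) - exp (- ((\<nu> - A)\<^sup>2 / (2 * B)))\<bar>"
    using abs_mult[of "sqrt (B / (2 * pi))" R] B_pos by simp
  moreover have "sqrt (B / (2 * pi)) * I
      = 6 / sqrt (2 * pi) * B powr (- \<epsilon>) + K * sqrt (2 * pi / B) + sqrt 2 * exp (- (\<delta>\<^sup>2 * B / 4))"
    unfolding I_def by (rule gaussian_error_integral_rescaled [OF B_pos])
  ultimately show ?thesis by simp
qed

end

section \<open>Fourier coefficients of H on the circle\<close>

lemma has_bochner_integral_iexp_int_period:
  fixes m :: int
  shows "has_bochner_integral lborel (\<lambda>\<theta>. indicator {-pi..pi} \<theta> *\<^sub>R iexp (m * \<theta>))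
           (if m = 0 then of_real (2 * pi) else 0)"
proof -
  have "set_integrable lborel {-pi..pi} (\<lambda>\<theta>. iexp (m * \<theta>))"
    unfolding set_integrable_def by (intro borel_integrable_compact continuous_intros) auto
  then have "has_bochner_integral lborel (\<lambda>\<theta>. indicator {-pi..pi} \<theta> *\<^sub>R iexp (m * \<theta>))
      (integral {-pi..pi} (\<lambda>\<theta>. iexp (m * \<theta>)))"
    using set_borel_integral_eq_integral
    by (simp add: has_bochner_integral_iff set_integrable_def set_lebesgue_integral_def)
  moreover have "integral {-pi..pi} (\<lambda>\<theta>. iexp (m * \<theta>)) = (if m = 0 then of_real (2 * pi) else 0)"
  proof (cases "m = 0")
    case False
    let ?F = "\<lambda>\<theta>::real. iexp (m * \<theta>) / (\<i> * of_int m)"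
    have "(?F has_vector_derivative iexp (m * \<theta>)) (at \<theta> within {-pi..pi})" for \<theta> :: real
    proof -
      have "((\<lambda>z. exp (\<i> * of_int m * z) / (\<i> * of_int m)) has_field_derivative
              exp (\<i> * of_int m * of_real \<theta>)) (at (of_real \<theta>))"
        using False by (auto intro!: derivative_eq_intros)
      from has_vector_derivative_real_field[OF this] show ?thesis
        by (simp add: mult.assoc)
    qed
    then have "((\<lambda>\<theta>. iexp (m * \<theta>)) has_integral (?F pi - ?F (-pi))) {-pi..pi}"
      by (intro fundamental_theorem_of_calculus) auto
    moreover have "iexp (m * pi) = iexp (m * (-pi))"
    proof -
      have "\<i> * of_real (m * pi) = \<i> * of_real (m * (-pi)) + (2 * of_int m * pi) * \<i>"
        by (simp add: algebra_simps)
      then have "iexp (m * pi) = iexp (m * (-pi)) * exp ((2 * of_int m * pi) * \<i>)"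
        by (simp only: exp_add)
      moreover have "exp ((2 * of_int m * pi) * \<i>) = 1"
        by (rule exp_integer_2pi) simp
      ultimately show ?thesis by simp
    qed
    ultimately show ?thesis using False by (simp add: integral_unique)
  qed (simp add: scaleR_conv_of_real)
  ultimately show ?thesis by simp
qed

lemma Hc_Complex_mult_iexp_eq_suminf:
  fixes b :: "nat \<Rightarrow> real" and t \<theta> :: real and n :: nat
  assumes nonneg: "\<And>k. b k \<ge> 0" and summable: "summable (\<lambda>k. b k * exp (real k * t))"
  shows "Hc b (Complex t \<theta>) * iexp (- (real n * \<theta>))
           = (\<Sum>k. of_real (b k * exp (real k * t)) * iexp (of_int (int k - int n) * \<theta>))"
proof -
  have summand: "of_real (b k) * exp (of_nat k * Complex t \<theta>) * iexp (- (real n * \<theta>))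
      = of_real (b k * exp (real k * t)) * iexp (of_int (int k - int n) * \<theta>)" for k
  proof -
    have "of_nat k * Complex t \<theta> + \<i> * of_real (- (real n * \<theta>))
        = of_real (real k * t) + \<i> * of_real (of_int (int k - int n) * \<theta>)"
      by (simp add: complex_eq_iff algebra_simps)
    then show ?thesis
      by (simp add: exp_add [symmetric] exp_of_real [symmetric] mult.assoc)
  qed
  have summable_complex: "summable (\<lambda>k. of_real (b k) * exp (of_nat k * Complex t \<theta>))"
    by (rule summable_norm_cancel, rule summable_comparison_test [OF _ summable])
       (use nonneg in \<open>auto simp: norm_mult\<close>)
  show ?thesis
    unfolding Hc_def suminf_mult2 [OF summable_complex] summand ..
qed

lemma has_bochner_integral_Hc_coefficient:
  fixes b :: "nat \<Rightarrow> real" and t :: real and n :: nat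
  assumes nonneg: "\<And>k. b k \<ge> 0" and summable: "summable (\<lambda>k. b k * exp (real k * t))"
  shows "has_bochner_integral lborel
           (\<lambda>\<theta>. indicator {-pi..pi} \<theta> *\<^sub>R (Hc b (Complex t \<theta>) * iexp (- (real n * \<theta>))))
           (of_real (2 * pi * (b n * exp (real n * t))))"
proof -
  define c where "c k = b k * exp (real k * t)" for k
  define f where "f k = (\<lambda>\<theta>::real. of_real (c k) * (indicator {-pi..pi} \<theta> *\<^sub>R iexp (of_int (int k - int n) * \<theta>)))"
    for k
  have f: "has_bochner_integral lborel (f k) (of_real (c k) * (if int k - int n = 0 then of_real (2 * pi) else 0))"
    for k
    unfolding f_def by (intro has_bochner_integral_mult_right has_bochner_integral_iexp_int_period)
  have norm_f: "norm (f k \<theta>) = c k * indicator {-pi..pi} \<theta>" for k \<theta>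
    using nonneg[of k] by (simp add: c_def f_def norm_mult indicator_def)
  have summable_norm: "summable (\<lambda>k. norm (f k \<theta>))" for \<theta>
    unfolding norm_f using summable by (intro summable_mult2) (simp add: c_def)
  have summable_integral: "summable (\<lambda>k. integral\<^sup>L lborel (\<lambda>\<theta>. norm (f k \<theta>)))"
    unfolding norm_f using summable by (simp add: c_def summable_mult2)
  have "(\<lambda>\<theta>. indicator {-pi..pi} \<theta> *\<^sub>R (Hc b (Complex t \<theta>) * iexp (- (real n * \<theta>)))) = (\<lambda>\<theta>. \<Sum>k. f k \<theta>)"
  proof
    fix \<theta> :: real
    show "indicator {-pi..pi} \<theta> *\<^sub>R (Hc b (Complex t \<theta>) * iexp (- (real n * \<theta>))) = (\<Sum>k. f k \<theta>)"
      by (cases "\<theta> \<in> {-pi..pi}")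
         (simp only: Hc_Complex_mult_iexp_eq_suminf [OF nonneg summable] f_def c_def indicator_simps
            scaleR_one, simp add: f_def)
  qed
  moreover have "integrable lborel (\<lambda>\<theta>. \<Sum>k. f k \<theta>)"
    using f summable_norm summable_integral by (intro integrable_suminf) (auto simp: has_bochner_integral_iff)
  moreover have "integral\<^sup>L lborel (\<lambda>\<theta>. \<Sum>k. f k \<theta>) = (\<Sum>k. integral\<^sup>L lborel (f k))"
    using f summable_norm summable_integral by (intro integral_suminf) (auto simp: has_bochner_integral_iff)
  moreover have "(\<lambda>k. integral\<^sup>L lborel (f k)) sums of_real (2 * pi * c n)"
    using f sums_single[of n "\<lambda>_. of_real (2 * pi * c n) :: complex"]
    by (simp add: has_bochner_integral_iff if_distrib [of "\<lambda>x. _ * x"] mult.commute cong: if_cong)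
  ultimately show ?thesis
    by (simp add: has_bochner_integral_iff sums_iff c_def)
qed

section \<open>Type II admissible functions\<close>

definition major_arc_expansion :: "(nat \<Rightarrow> real) \<Rightarrow> real \<Rightarrow> real \<Rightarrow> real \<Rightarrow> bool" where
  "major_arc_expansion b CG \<epsilon> t \<longleftrightarrow>
     (\<forall>\<theta>. \<bar>\<theta>\<bar> \<le> deltaf b CG t \<longrightarrow>
        (\<exists>D. Hc b (Complex t \<theta>) =
               of_real (Hr b t) * exp (\<i> * of_real (\<theta> * Af b t) - of_real (\<theta>\<^sup>2 * Bf b t / 2) + D)
             \<and> norm D \<le> Bf b t powr (3/2 - \<epsilon>) * \<bar>\<theta>\<bar> ^ 3))"

definition minor_arc_bound :: "(nat \<Rightarrow> real) \<Rightarrow> real \<Rightarrow> real \<Rightarrow> real \<Rightarrow> bool" where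
  "minor_arc_bound b CG K t \<longleftrightarrow>
     (\<forall>\<theta>. deltaf b CG t \<le> \<bar>\<theta>\<bar> \<and> \<bar>\<theta>\<bar> \<le> pi \<longrightarrow> norm (Hc b (Complex t \<theta>)) \<le> K * Hr b t / Bf b t)"

lemma filterlim_at_top_mono_unbounded:
  fixes f :: "'a::linorder \<Rightarrow> 'b::linorder"
  assumes "mono f" and "\<not> bdd_above (range f)"
  shows "filterlim f at_top at_top"
  unfolding filterlim_at_top
proof
  fix Z :: 'b
  obtain t where "Z < f t"
    using assms(2) by (auto simp: bdd_above_def not_le)
  then show "\<forall>\<^sub>F x in at_top. Z \<le> f x"
    unfolding eventually_at_top_linorder using assms(1) by (meson less_imp_le monoD order_trans)
qed

lemma
  assumes "type_II_admissible b"
  shows type_II_admissible_nonneg: "b k \<ge> 0"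
    and type_II_admissible_summable: "summable (\<lambda>k. b k * exp (real k * t))"
    and type_II_admissible_Hr_pos: "Hr b t > 0"
    and type_II_admissible_Bf_at_top: "filterlim (Bf b) at_top at_top"
proof -
  show nonneg: "b k \<ge> 0" for k
    using assms by (simp add: type_II_admissible_def)
  show summable: "summable (\<lambda>k. b k * exp (real k * t))" for t
  proof -
    have "\<forall>z::complex. summable (\<lambda>k. b k * norm z ^ k)"
      using assms by (simp add: type_II_admissible_def)
    then have "summable (\<lambda>k. b k * norm (complex_of_real (exp t)) ^ k)" ..
    then show ?thesis by (simp flip: exp_of_nat_mult)
  qed
  have "infinite {k. b k \<noteq> 0}"
    using assms by (simp add: type_II_admissible_def)
  then obtain k where "b k \<noteq> 0"
    using infinite_imp_nonempty by blast
  then show "Hr b t > 0"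
    unfolding Hr_def using nonneg
    by (intro suminf_pos2 [OF summable, where i = k]) (auto intro: order.not_eq_order_implies_strict)
  show "filterlim (Bf b) at_top at_top"
    using assms by (intro filterlim_at_top_mono_unbounded) (simp_all add: type_II_admissible_def)
qed

lemma type_II_admissible_arcs:
  assumes "type_II_admissible b"
  obtains CG \<epsilon> K where "CG > 2" "\<epsilon> > 0"
    "\<forall>\<^sub>F t in at_top. major_arc_expansion b CG \<epsilon> t" "\<forall>\<^sub>F t in at_top. minor_arc_bound b CG K t"
  using assms unfolding type_II_admissible_def major_arc_expansion_def minor_arc_bound_def
  by (elim exE conjE)
     (rule that [unfolded major_arc_expansion_def minor_arc_bound_def]; assumption)

lemma exp_neg_delta_sq_le:
  fixes B CG :: real
  assumes "1 \<le> B" and "2 \<le> CG"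
  shows "exp (- ((sqrt (CG * ln B / B))\<^sup>2 * B / 4)) \<le> B powr (-1/2)"
proof -
  have "(sqrt (CG * ln B / B))\<^sup>2 * B / 4 = CG * ln B / 4"
    using assms by simp
  moreover have "2 * ln B \<le> CG * ln B"
    using assms by (intro mult_right_mono) auto
  ultimately show ?thesis
    using assms by (simp add: powr_def)
qed

lemma Hc_saddle_point_data:
  fixes b :: "nat \<Rightarrow> real" and t CG \<epsilon> K :: real and n :: nat
  assumes nonneg: "\<And>k. b k \<ge> 0" and summable: "summable (\<lambda>k. b k * exp (real k * t))"
    and H_pos: "Hr b t > 0" and B_ge_1: "1 \<le> Bf b t" and CG: "2 \<le> CG"
    and delta_less_pi: "deltaf b CG t < pi"
    and cubic_error_small: "Bf b t powr (3/2 - \<epsilon>) * deltaf b CG t ^ 3 \<le> 1/2"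
    and major: "major_arc_expansion b CG \<epsilon> t" and minor: "minor_arc_bound b CG K t"
  shows "saddle_point_data (\<lambda>\<theta>. Hc b (Complex t \<theta>) / of_real (Hr b t)) (b n * exp (real n * t) / Hr b t)
           (Af b t) (Bf b t) (real n) (deltaf b CG t) \<epsilon> K"
proof
  let ?H = "Hr b t" and ?B = "Bf b t" and ?\<delta> = "deltaf b CG t"
  show "?B > 0" using B_ge_1 by simp
  have "has_bochner_integral lborel
      (\<lambda>\<theta>. (indicator {-pi..pi} \<theta> *\<^sub>R (Hc b (Complex t \<theta>) * iexp (- (real n * \<theta>)))) / of_real ?H)
      (of_real (2 * pi * (b n * exp (real n * t))) / of_real ?H)"
    by (intro has_bochner_integral_divide_zero has_bochner_integral_Hc_coefficient nonneg summable)
  then show "has_bochner_integral lborel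
      (\<lambda>\<theta>. indicator {-pi..pi} \<theta> *\<^sub>R (Hc b (Complex t \<theta>) / of_real ?H * iexp (- (real n * \<theta>))))
      (of_real (2 * pi * (b n * exp (real n * t) / ?H)))"
    by (simp add: scaleR_conv_of_real)
  show "0 \<le> ?\<delta>"
    using CG B_ge_1 by (auto simp: deltaf_def intro!: divide_nonneg_pos mult_nonneg_nonneg)
  show "?\<delta> < pi" "?B powr (3/2 - \<epsilon>) * ?\<delta> ^ 3 \<le> 1/2"
    by (fact delta_less_pi cubic_error_small)+
  show "\<exists>D. Hc b (Complex t \<theta>) / of_real ?H = exp (\<i> * of_real (\<theta> * Af b t) - of_real (\<theta>\<^sup>2 * ?B / 2) + D)
            \<and> norm D \<le> ?B powr (3/2 - \<epsilon>) * \<bar>\<theta>\<bar> ^ 3"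
    if inner: "\<bar>\<theta>\<bar> \<le> ?\<delta>" for \<theta>
  proof -
    obtain D where "Hc b (Complex t \<theta>) = of_real ?H * exp (\<i> * of_real (\<theta> * Af b t) - of_real (\<theta>\<^sup>2 * ?B / 2) + D)"
      and "norm D \<le> ?B powr (3/2 - \<epsilon>) * \<bar>\<theta>\<bar> ^ 3"
      using major inner unfolding major_arc_expansion_def by blast
    then show ?thesis using H_pos by (intro exI [of _ D]) simp
  qed
  show "norm (Hc b (Complex t \<theta>) / of_real ?H) \<le> K / ?B"
    if "?\<delta> \<le> \<bar>\<theta>\<bar>" "\<bar>\<theta>\<bar> \<le> pi" for \<theta>
    using minor that H_pos by (simp add: minor_arc_bound_def norm_divide divide_le_eq)
qed

lemma coefficient_normal_approximation:
  fixes b :: "nat \<Rightarrow> real" and t CG \<epsilon> K :: real and n :: nat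
  assumes "\<And>k. b k \<ge> 0" and "summable (\<lambda>k. b k * exp (real k * t))"
    and "Hr b t > 0" and B_ge_1: "1 \<le> Bf b t" and CG: "2 \<le> CG"
    and "deltaf b CG t < pi"
    and "Bf b t powr (3/2 - \<epsilon>) * deltaf b CG t ^ 3 \<le> 1/2"
    and "major_arc_expansion b CG \<epsilon> t" and "minor_arc_bound b CG K t"
  shows "\<bar>b n * exp (real n * t) * sqrt (2 * pi * Bf b t) / Hr b t
            - exp (- ((real n - Af b t)\<^sup>2 / (2 * Bf b t)))\<bar>
         \<le> 6 / sqrt (2 * pi) * Bf b t powr (- \<epsilon>) + (K * sqrt (2 * pi) + sqrt 2) * Bf b t powr (-1/2)"
proof -
  let ?H = "Hr b t" and ?B = "Bf b t" and ?\<delta> = "deltaf b CG t"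
  interpret saddle_point_data "\<lambda>\<theta>. Hc b (Complex t \<theta>) / of_real ?H" "b n * exp (real n * t) / ?H"
      "Af b t" ?B "real n" ?\<delta> \<epsilon> K
    by (rule Hc_saddle_point_data) (fact assms)+
  have tail: "sqrt 2 * exp (- (?\<delta>\<^sup>2 * ?B / 4)) \<le> sqrt 2 * ?B powr (-1/2)"
    unfolding deltaf_def using exp_neg_delta_sq_le [OF B_ge_1 CG] by (rule mult_left_mono) simp
  have "sqrt (2 * pi / ?B) = sqrt (2 * pi) * ?B powr (-1/2)"
    using B_pos by (simp add: real_sqrt_divide powr_minus_divide powr_half_sqrt)
  moreover have "b n * exp (real n * t) / ?H * sqrt (2 * pi * ?B) = b n * exp (real n * t) * sqrt (2 * pi * ?B) / ?H"
    by simp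
  ultimately show ?thesis
    using normal_approximation_error tail by (simp only: distrib_right mult.assoc)
qed

lemma error_terms_le_powr:
  fixes B \<epsilon> \<epsilon>' P Q :: real
  assumes "1 \<le> B" "0 \<le> P" "\<epsilon>' \<le> \<epsilon>" "\<epsilon>' \<le> 1/2"
  shows "P * B powr (- \<epsilon>) + Q * B powr (-1/2) \<le> (P + \<bar>Q\<bar>) / B powr \<epsilon>'"
proof -
  have powr_le: "B powr (- \<epsilon>) \<le> B powr (- \<epsilon>')" "B powr (-1/2) \<le> B powr (- \<epsilon>')"
    using assms by (intro powr_mono; simp)+
  have "P * B powr (- \<epsilon>) \<le> P * B powr (- \<epsilon>')"
    using powr_le(1) assms(2) by (rule mult_left_mono)
  moreover have "Q * B powr (-1/2) \<le> \<bar>Q\<bar> * B powr (- \<epsilon>')"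
    using powr_le(2) by (intro mult_mono) auto
  ultimately have "P * B powr (- \<epsilon>) + Q * B powr (-1/2) \<le> P * B powr (- \<epsilon>') + \<bar>Q\<bar> * B powr (- \<epsilon>')"
    by linarith
  also have "\<dots> = (P + \<bar>Q\<bar>) / B powr \<epsilon>'"
    by (simp add: powr_minus_divide add_divide_distrib)
  finally show ?thesis .
qed

lemma type_II_admissible_normal_approximation:
  assumes "type_II_admissible b"
  obtains \<epsilon> C where "0 < \<epsilon>" "\<epsilon> < 1" "C > 0"
    "\<forall>\<^sub>F t in at_top. \<forall>n. \<bar>b n * exp (real n * t) * sqrt (2 * pi * Bf b t) / Hr b t
                              - exp (- ((real n - Af b t)\<^sup>2 / (2 * Bf b t)))\<bar> \<le> C / Bf b t powr \<epsilon>"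
proof -
  obtain CG \<epsilon> K where CG: "CG > 2" and \<epsilon>: "\<epsilon> > 0"
    and major: "\<forall>\<^sub>F t in at_top. major_arc_expansion b CG \<epsilon> t"
    and minor: "\<forall>\<^sub>F t in at_top. minor_arc_bound b CG K t"
    using type_II_admissible_arcs [OF assms] .
  have "\<forall>\<^sub>F B in at_top. 1 \<le> B \<and> sqrt (CG * ln B / B) < pi
                          \<and> B powr (3/2 - \<epsilon>) * sqrt (CG * ln B / B) ^ 3 \<le> 1/2"
    using CG \<epsilon> by (intro eventually_conj) real_asymp+
  then have small_delta: "\<forall>\<^sub>F t in at_top. 1 \<le> Bf b t \<and> deltaf b CG t < pi
                            \<and> Bf b t powr (3/2 - \<epsilon>) * deltaf b CG t ^ 3 \<le> 1/2"
    unfolding deltaf_def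
    by (rule eventually_compose_filterlim [OF _ type_II_admissible_Bf_at_top [OF assms]])
  define C where "C = 6 / sqrt (2 * pi) + \<bar>K * sqrt (2 * pi) + sqrt 2\<bar>"
  have "\<forall>\<^sub>F t in at_top. \<forall>n. \<bar>b n * exp (real n * t) * sqrt (2 * pi * Bf b t) / Hr b t
                              - exp (- ((real n - Af b t)\<^sup>2 / (2 * Bf b t)))\<bar> \<le> C / Bf b t powr min \<epsilon> (1/2)"
    using small_delta major minor
  proof eventually_elim
    case (elim t)
    show ?case
    proof
      fix n
      have "\<bar>b n * exp (real n * t) * sqrt (2 * pi * Bf b t) / Hr b t
              - exp (- ((real n - Af b t)\<^sup>2 / (2 * Bf b t)))\<bar>
          \<le> 6 / sqrt (2 * pi) * Bf b t powr (- \<epsilon>) + (K * sqrt (2 * pi) + sqrt 2) * Bf b t powr (-1/2)"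
        using elim CG
        by (intro coefficient_normal_approximation type_II_admissible_nonneg type_II_admissible_summable
            type_II_admissible_Hr_pos assms) auto
      also have "\<dots> \<le> C / Bf b t powr min \<epsilon> (1/2)"
        unfolding C_def using elim by (intro error_terms_le_powr) auto
      finally show "\<bar>b n * exp (real n * t) * sqrt (2 * pi * Bf b t) / Hr b t
              - exp (- ((real n - Af b t)\<^sup>2 / (2 * Bf b t)))\<bar> \<le> C / Bf b t powr min \<epsilon> (1/2)" .
    qed
  qed
  moreover have "0 < min \<epsilon> (1/2)" "min \<epsilon> (1/2) < 1" "C > 0"
    using \<epsilon> by (auto simp: C_def intro!: add_pos_nonneg)
  ultimately show ?thesis using that by blast
qed

theorem lemma6p5:
  fixes a :: "nat \<Rightarrow> real"
  assumes "type_II_admissible (\<lambda>n. (a n)\<^sup>2)"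
  shows "\<exists>\<epsilon>::real. 0 < \<epsilon> \<and> \<epsilon> < 1 \<and> (\<exists>C>0. \<exists>t0. \<forall>t\<ge>t0. \<forall>n::nat.
           \<bar>(a n)\<^sup>2 * exp (real n * t) * sqrt (2 * pi * Bf (\<lambda>n. (a n)\<^sup>2) t) / Hr (\<lambda>n. (a n)\<^sup>2) t
             - exp (- ((real n - Af (\<lambda>n. (a n)\<^sup>2) t)\<^sup>2 / (2 * Bf (\<lambda>n. (a n)\<^sup>2) t)))\<bar>
           \<le> C / Bf (\<lambda>n. (a n)\<^sup>2) t powr \<epsilon>)"
proof -
  obtain \<epsilon> C where "0 < \<epsilon>" "\<epsilon> < 1" "C > 0" and bound:
    "\<forall>\<^sub>F t in at_top. \<forall>n. \<bar>(a n)\<^sup>2 * exp (real n * t) * sqrt (2 * pi * Bf (\<lambda>n. (a n)\<^sup>2) t) / Hr (\<lambda>n. (a n)\<^sup>2) t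
         - exp (- ((real n - Af (\<lambda>n. (a n)\<^sup>2) t)\<^sup>2 / (2 * Bf (\<lambda>n. (a n)\<^sup>2) t)))\<bar>
       \<le> C / Bf (\<lambda>n. (a n)\<^sup>2) t powr \<epsilon>"
    using type_II_admissible_normal_approximation [OF assms] by blast
  then show ?thesis
    unfolding eventually_at_top_linorder by blast
qed

end
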